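(* Let $(\beta_n),(\gamma_n)$ be sequences of positive real numbers that are non-decreasing, satisfy $\gamma_n\ge\beta_n$ for all $n$ and $\gamma_n-\beta_n\to\infty$. Let $t=(t_n)$ be a sequence of positive real numbers with $T_{\beta\gamma(n)}:=\sum_{k\in[\beta_n,\gamma_n]}t_k\to\infty$ as $n\to\infty$ (the sum being over positive integers $k$ in $[\beta_n,\gamma_n]$). For $\theta\in(0,1]$, say that a sequence $(\hat f_k)$ of fuzzy functions $\hat f_k:[a,b]\to L(\mathbb R)$ belongs to $N^{\theta}_{\beta\gamma}(t)$ (with limit $\hat f:[a,b]\to L(\mathbb R)$) if for every $x\in[a,b]$, $$\frac{1}{T_{\beta\gamma(n)}^{\theta}}\sum_{k\in[\beta_n,\gamma_n]}t_k\,d(\hat f_k(x),\hat f(x))\to 0\quad (n\to\infty).$$ Then: (i) If $(\hat f_k)\in N^{\theta}_{\beta\gamma}(t)$ with limit $\hat f$ and $(\hat g_k)\in N^{\theta}_{\beta\gamma}(t)$ with limit $\hat g$, then $(\hat f_k+\hat g_k)\in N^{\theta}_{\beta\gamma}(t)$ (with limit $\hat f+\hat g$) and $(c\hat f_k)\in N^{\theta}_{\beta\gamma}(t)$ (with limit $c\hat f$) for every $c\in\mathbb R$. (ii) If $0<\theta\le\delta\le1$, then $N^{\theta}_{\beta\gamma}(t)\subseteq N^{\delta}_{\beta\gamma}(t)$; moreover, the inclusion is strict for some $\theta<\delta$.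
   Context: $L(\mathbb R)$ denotes the set of fuzzy real numbers: maps $\hat x:\mathbb R\to[0,1]$ that are normal, fuzzy convex, upper semicontinuous, with $\{t:\hat x(t)>0\}$ having compact closure. For $\alpha\in(0,1]$ the $\alpha$-cut is $[\hat x]_\alpha=\{t:\hat x(t)\ge\alpha\}=[(\hat x)^-_\alpha,(\hat x)^+_\alpha]$. The metric on $L(\mathbb R)$ is $d(\hat x,\hat y)=\sup_{0\le\alpha\le1}\max\{|(\hat x)^-_\alpha-(\hat y)^-_\alpha|,|(\hat x)^+_\alpha-(\hat y)^+_\alpha|\}$. Addition and real scalar multiplication of fuzzy numbers are the usual ones (via $\alpha$-cuts). A fuzzy function on $[a,b]$ is a map $[a,b]\to L(\mathbb R)$; operations on fuzzy functions are pointwise. *)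

theory Defs
  imports "HOL-Analysis.Analysis"
begin

text \<open>Fuzzy real numbers are represented by their membership functions real => real.\<close>

definition usc_fun :: "(real \<Rightarrow> real) \<Rightarrow> bool" where
  "usc_fun u \<longleftrightarrow> (\<forall>x. \<forall>e>0. \<exists>d>0. \<forall>y. \<bar>y - x\<bar> < d \<longrightarrow> u y < u x + e)"

definition fuzzy_number :: "(real \<Rightarrow> real) \<Rightarrow> bool" where
  "fuzzy_number u \<longleftrightarrow>
     (\<forall>t. 0 \<le> u t \<and> u t \<le> 1) \<and>
     (\<exists>t. u t = 1) \<and>
     (\<forall>x y l. 0 \<le> l \<and> l \<le> 1 \<longrightarrow> min (u x) (u y) \<le> u (l * x + (1 - l) * y)) \<and>
     usc_fun u \<and>
     compact (closure {t. u t > 0})"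

definition fcut :: "(real \<Rightarrow> real) \<Rightarrow> real \<Rightarrow> real set" where
  "fcut u a = (if a = 0 then closure {t. u t > 0} else {t. a \<le> u t})"

definition fcut_lo :: "(real \<Rightarrow> real) \<Rightarrow> real \<Rightarrow> real" where
  "fcut_lo u a = Inf (fcut u a)"

definition fcut_hi :: "(real \<Rightarrow> real) \<Rightarrow> real \<Rightarrow> real" where
  "fcut_hi u a = Sup (fcut u a)"

definition fdist :: "(real \<Rightarrow> real) \<Rightarrow> (real \<Rightarrow> real) \<Rightarrow> real" where
  "fdist u v = (SUP a\<in>{0..1}. max \<bar>fcut_lo u a - fcut_lo v a\<bar> \<bar>fcut_hi u a - fcut_hi v a\<bar>)"

definition fadd :: "(real \<Rightarrow> real) \<Rightarrow> (real \<Rightarrow> real) \<Rightarrow> (real \<Rightarrow> real)" where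
  "fadd u v = (\<lambda>t. SUP s. min (u s) (v (t - s)))"

definition fscale :: "real \<Rightarrow> (real \<Rightarrow> real) \<Rightarrow> (real \<Rightarrow> real)" where
  "fscale c u = (if c = 0 then (\<lambda>t. if t = 0 then 1 else 0) else (\<lambda>t. u (t / c)))"

definition fuzzy_fun :: "real \<Rightarrow> real \<Rightarrow> (real \<Rightarrow> real \<Rightarrow> real) \<Rightarrow> bool" where
  "fuzzy_fun a b f \<longleftrightarrow> (\<forall>x\<in>{a..b}. fuzzy_number (f x))"

definition bg_idx :: "(nat \<Rightarrow> real) \<Rightarrow> (nat \<Rightarrow> real) \<Rightarrow> nat \<Rightarrow> nat set" where
  "bg_idx \<beta> \<gamma> n = {k. 1 \<le> k \<and> \<beta> n \<le> real k \<and> real k \<le> \<gamma> n}"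

definition Tbg :: "(nat \<Rightarrow> real) \<Rightarrow> (nat \<Rightarrow> real) \<Rightarrow> (nat \<Rightarrow> real) \<Rightarrow> nat \<Rightarrow> real" where
  "Tbg \<beta> \<gamma> t n = (\<Sum>k\<in>bg_idx \<beta> \<gamma> n. t k)"

definition N_lim :: "real \<Rightarrow> real \<Rightarrow> real \<Rightarrow> (nat \<Rightarrow> real) \<Rightarrow> (nat \<Rightarrow> real) \<Rightarrow> (nat \<Rightarrow> real)
    \<Rightarrow> (nat \<Rightarrow> real \<Rightarrow> real \<Rightarrow> real) \<Rightarrow> (real \<Rightarrow> real \<Rightarrow> real) \<Rightarrow> bool" where
  "N_lim \<theta> a b \<beta> \<gamma> t fs f \<longleftrightarrow>
     (\<forall>k. fuzzy_fun a b (fs k)) \<and> fuzzy_fun a b f \<and>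
     (\<forall>x\<in>{a..b}. ((\<lambda>n. (1 / (Tbg \<beta> \<gamma> t n) powr \<theta>) *
        (\<Sum>k\<in>bg_idx \<beta> \<gamma> n. t k * fdist (fs k x) (f x))) \<longlongrightarrow> 0) sequentially)"

definition N_set :: "real \<Rightarrow> real \<Rightarrow> real \<Rightarrow> (nat \<Rightarrow> real) \<Rightarrow> (nat \<Rightarrow> real) \<Rightarrow> (nat \<Rightarrow> real)
    \<Rightarrow> (nat \<Rightarrow> real \<Rightarrow> real \<Rightarrow> real) set" where
  "N_set \<theta> a b \<beta> \<gamma> t = {fs. \<exists>f. N_lim \<theta> a b \<beta> \<gamma> t fs f}"

end

theory Submission
  imports Defs
begin

text \<open>
  Everything reduces to the alpha-cut picture of fuzzy arithmetic. The superlevel sets of a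
  Zadeh sum are the Minkowski sums of the superlevel sets of the summands (the supremum in the
  extension principle is attained, by compactness and upper semicontinuity), and those of a
  scalar multiple are scaled copies. Hence the cut endpoints are additive and homogeneous, which
  gives \<open>d(u + v, u' + v') \<le> d(u, u') + d(v, v')\<close> and \<open>d(c u, c v) \<le> \<bar>c\<bar> d(u, v)\<close>, and part (i)
  follows by comparing weighted means. The inclusion in part (ii) holds because
  \<open>T\<^sup>-\<^sup>\<delta> \<le> T\<^sup>-\<^sup>\<theta>\<close> once \<open>T \<ge> 1\<close>. For strictness take crisp numbers \<open>R\<^sub>k \<longrightarrow> 0\<close> with
  \<open>R\<^sub>k \<ge> T\<^sub>n\<^sup>-\<^sup>1\<^sup>/\<^sup>2\<close> whenever \<open>k\<close> lies in the \<open>n\<close>-th window: their means with \<open>\<theta> = 1\<close> tend to 0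
  (a Toeplitz argument), while those with \<open>\<theta> = 1/2\<close> stay \<open>\<ge> 1\<close>. A different limit for
  \<open>\<theta> = 1/2\<close> is excluded since it would also be a limit for \<open>\<theta> = 1\<close>, and such limits are unique.
\<close>

section \<open>Infima and suprema of sets of reals\<close>

lemma cInf_closure:
  fixes S :: "real set"
  assumes "S \<noteq> {}" "bdd_below S"
  shows "Inf (closure S) = Inf S"
proof -
  have sub: "closure S \<subseteq> {Inf S..}"
    by (rule closure_minimal) (use assms cInf_lower in auto)
  then have "bdd_below (closure S)"
    by (meson bdd_below_Ici bdd_below_mono)
  moreover have "Inf S \<le> Inf (closure S)"
    using sub assms(1) by (intro cInf_greatest) auto
  ultimately show ?thesis
    using assms closure_subset by (meson antisym cInf_superset_mono)
qed

lemma cSup_closure: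
  fixes S :: "real set"
  assumes "S \<noteq> {}" "bdd_above S"
  shows "Sup (closure S) = Sup S"
proof -
  have sub: "closure S \<subseteq> {..Sup S}"
    by (rule closure_minimal) (use assms cSup_upper in auto)
  then have "bdd_above (closure S)"
    by (meson bdd_above_Iic bdd_above_mono)
  moreover have "Sup (closure S) \<le> Sup S"
    using sub assms(1) by (intro cSup_least) auto
  ultimately show ?thesis
    using assms closure_subset by (meson antisym cSup_subset_mono)
qed

lemma cInf_set_plus:
  fixes A B :: "real set"
  assumes "A \<noteq> {}" "B \<noteq> {}" "bdd_below A" "bdd_below B"
  shows "Inf (A + B) = Inf A + Inf B"
proof (rule antisym)
  have lower: "Inf A + Inf B \<le> z" if "z \<in> A + B" for z
    using that assms by (auto simp: set_plus_def intro: add_mono cInf_lower)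
  then show "Inf A + Inf B \<le> Inf (A + B)"
    using assms by (intro cInf_greatest) auto
  have bdd: "bdd_below (A + B)"
    using lower by (rule bdd_belowI)
  have "Inf (A + B) - y \<le> Inf A" if "y \<in> B" for y
    using that assms(1) by (intro cInf_greatest) (auto simp: algebra_simps intro: cInf_lower[OF _ bdd])
  then have "Inf (A + B) - Inf A \<le> Inf B"
    using assms(2) by (intro cInf_greatest) (auto simp: algebra_simps)
  then show "Inf (A + B) \<le> Inf A + Inf B" by simp
qed

lemma cSup_set_plus:
  fixes A B :: "real set"
  assumes "A \<noteq> {}" "B \<noteq> {}" "bdd_above A" "bdd_above B"
  shows "Sup (A + B) = Sup A + Sup B"
proof (rule antisym)
  have upper: "z \<le> Sup A + Sup B" if "z \<in> A + B" for z
    using that assms by (auto simp: set_plus_def intro: add_mono cSup_upper)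
  then show "Sup (A + B) \<le> Sup A + Sup B"
    using assms by (intro cSup_least) auto
  have bdd: "bdd_above (A + B)"
    using upper by (rule bdd_aboveI)
  have "Sup A \<le> Sup (A + B) - y" if "y \<in> B" for y
    using that assms(1) by (intro cSup_least) (auto simp: algebra_simps intro: cSup_upper[OF _ bdd])
  then have "Sup B \<le> Sup (A + B) - Sup A"
    using assms(2) by (intro cSup_least) (auto simp: algebra_simps)
  then show "Sup A + Sup B \<le> Sup (A + B)" by simp
qed

lemma cInf_cSup_image_mult_nonneg:
  fixes A :: "real set"
  assumes "0 \<le> c" "A \<noteq> {}" "bounded A"
  shows "Inf ((*) c ` A) = c * Inf A" and "Sup ((*) c ` A) = c * Sup A"
proof -
  have "mono ((*) c)"
    using assms(1) by (auto simp: mono_def mult_left_mono)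
  moreover have "continuous (at_right (Inf A)) ((*) c)" "continuous (at_left (Sup A)) ((*) c)"
    by (intro continuous_intros)+
  ultimately show "Inf ((*) c ` A) = c * Inf A" "Sup ((*) c ` A) = c * Sup A"
    using assms(2,3) continuous_at_Inf_mono[of "(*) c" A] continuous_at_Sup_mono[of "(*) c" A]
    by (simp_all add: bounded_imp_bdd_below bounded_imp_bdd_above)
qed

lemma cInf_cSup_image_mult_nonpos:
  fixes A :: "real set"
  assumes "c \<le> 0" "A \<noteq> {}" "bounded A"
  shows "Inf ((*) c ` A) = c * Sup A" and "Sup ((*) c ` A) = c * Inf A"
proof -
  have "antimono ((*) c)"
    using assms(1) by (auto simp: antimono_def mult_left_mono_neg)
  moreover have "continuous (at_left (Sup A)) ((*) c)" "continuous (at_right (Inf A)) ((*) c)"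
    by (intro continuous_intros)+
  ultimately show "Inf ((*) c ` A) = c * Sup A" "Sup ((*) c ` A) = c * Inf A"
    using assms(2,3) continuous_at_Sup_antimono[of "(*) c" A] continuous_at_Inf_antimono[of "(*) c" A]
    by (simp_all add: bounded_imp_bdd_below bounded_imp_bdd_above)
qed

section \<open>Fuzzy numbers and their level sets\<close>

lemma usc_fun_iff_closed_superlevel: "usc_fun h \<longleftrightarrow> (\<forall>a. closed {t. a \<le> h t})"
proof
  assume h: "usc_fun h"
  show "\<forall>a. closed {t. a \<le> h t}"
    unfolding closed_def open_dist
  proof (intro allI ballI)
    fix a x assume "x \<in> - {t. a \<le> h t}"
    then have "0 < a - h x" by simp
    then obtain d where "d > 0" "\<forall>y. \<bar>y - x\<bar> < d \<longrightarrow> h y < h x + (a - h x)"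
      using h unfolding usc_fun_def by blast
    then show "\<exists>e>0. \<forall>y. dist y x < e \<longrightarrow> y \<in> - {t. a \<le> h t}"
      by (auto simp: dist_real_def not_le)
  qed
next
  assume closed: "\<forall>a. closed {t. a \<le> h t}"
  show "usc_fun h"
    unfolding usc_fun_def
  proof (intro allI impI)
    fix x e :: real assume "0 < e"
    then have "x \<in> - {t. h x + e \<le> h t}" by simp
    moreover have "open (- {t. h x + e \<le> h t})" using closed by auto
    ultimately obtain d where "d > 0" "\<forall>y. dist y x < d \<longrightarrow> y \<in> - {t. h x + e \<le> h t}"
      unfolding open_dist by blast
    then show "\<exists>d>0. \<forall>y. \<bar>y - x\<bar> < d \<longrightarrow> h y < h x + e"
      by (auto simp: dist_real_def not_le)
  qed
qed

lemma fuzzy_convex_iff_convex_superlevel: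
  fixes u :: "real \<Rightarrow> real"
  shows "(\<forall>x y l. 0 \<le> l \<and> l \<le> 1 \<longrightarrow> min (u x) (u y) \<le> u (l * x + (1 - l) * y)) \<longleftrightarrow>
   (\<forall>a. convex {t. a \<le> u t})"
proof
  assume conv: "\<forall>x y l. 0 \<le> l \<and> l \<le> 1 \<longrightarrow> min (u x) (u y) \<le> u (l * x + (1 - l) * y)"
  show "\<forall>a. convex {t. a \<le> u t}"
    unfolding convex_alt
  proof (intro allI ballI impI)
    fix a x y l :: real assume "x \<in> {t. a \<le> u t}" "y \<in> {t. a \<le> u t}" "0 \<le> l \<and> l \<le> 1"
    then show "(1 - l) *\<^sub>R x + l *\<^sub>R y \<in> {t. a \<le> u t}"
      using conv[rule_format, of "1 - l" x y] by (auto simp: min_def split: if_splits)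
  qed
next
  assume "\<forall>a. convex {t. a \<le> u t}"
  then show "\<forall>x y l. 0 \<le> l \<and> l \<le> 1 \<longrightarrow> min (u x) (u y) \<le> u (l * x + (1 - l) * y)"
    unfolding convex_alt by (metis min.cobounded1 min.cobounded2 mem_Collect_eq real_scaleR_def add.commute)
qed

lemma fuzzy_number_range: "fuzzy_number u \<Longrightarrow> 0 \<le> u t \<and> u t \<le> 1"
  by (simp add: fuzzy_number_def)

lemma fuzzy_number_iff_superlevel:
  "fuzzy_number u \<longleftrightarrow>
     (\<forall>t. 0 \<le> u t \<and> u t \<le> 1) \<and> (\<exists>t. u t = 1) \<and>
     (\<forall>a. closed {t. a \<le> u t} \<and> convex {t. a \<le> u t}) \<and> bounded {t. 0 < u t}"
  unfolding fuzzy_number_def usc_fun_iff_closed_superlevel fuzzy_convex_iff_convex_superlevel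
    compact_closure by blast

lemma fuzzy_numberI:
  assumes "\<And>t. 0 \<le> u t" "\<And>t. u t \<le> 1" "u t0 = 1"
    and "\<And>a. closed {t. a \<le> u t}" "\<And>a. convex {t. a \<le> u t}" "bounded {t. 0 < u t}"
  shows "fuzzy_number u"
  using assms unfolding fuzzy_number_iff_superlevel by blast

text \<open>
  The alpha-cut with the support in place of its closure: it has the same endpoints as \<open>fcut\<close>
  but commutes with addition and scaling.
\<close>
definition level_set :: "(real \<Rightarrow> real) \<Rightarrow> real \<Rightarrow> real set" where
  "level_set u a = (if a = 0 then {t. 0 < u t} else {t. a \<le> u t})"

lemma level_set_subset_support: "0 \<le> a \<Longrightarrow> level_set u a \<subseteq> {t. 0 < u t}"
  by (auto simp: level_set_def)

lemma level_set_nonempty: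
  assumes "fuzzy_number u" "a \<le> 1"
  shows "level_set u a \<noteq> {}"
proof -
  obtain t where "u t = 1"
    using assms(1) by (auto simp: fuzzy_number_def)
  then have "t \<in> level_set u a"
    using assms(2) by (simp add: level_set_def)
  then show ?thesis by blast
qed

lemma bounded_support: "fuzzy_number u \<Longrightarrow> bounded {t. 0 < u t}"
  by (simp add: fuzzy_number_iff_superlevel)

lemma bounded_level_set: "fuzzy_number u \<Longrightarrow> 0 \<le> a \<Longrightarrow> bounded (level_set u a)"
  by (rule bounded_subset[OF bounded_support level_set_subset_support])

lemma fcut_lo_eq_Inf_level_set:
  assumes "fuzzy_number u"
  shows "fcut_lo u a = Inf (level_set u a)"
proof -
  have "Inf (closure {t. 0 < u t}) = Inf {t. 0 < u t}"
    using level_set_nonempty[OF assms(1), of 0] bounded_support[OF assms(1)]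
    by (simp add: level_set_def cInf_closure bounded_imp_bdd_below)
  then show ?thesis
    by (simp add: fcut_lo_def fcut_def level_set_def)
qed

lemma fcut_hi_eq_Sup_level_set:
  assumes "fuzzy_number u"
  shows "fcut_hi u a = Sup (level_set u a)"
proof -
  have "Sup (closure {t. 0 < u t}) = Sup {t. 0 < u t}"
    using level_set_nonempty[OF assms(1), of 0] bounded_support[OF assms(1)]
    by (simp add: level_set_def cSup_closure bounded_imp_bdd_above)
  then show ?thesis
    by (simp add: fcut_hi_def fcut_def level_set_def)
qed

lemma fcut_endpoints_bounded:
  assumes u: "fuzzy_number u"
  obtains B where "\<And>a. a \<in> {0..1} \<Longrightarrow> \<bar>fcut_lo u a\<bar> \<le> B \<and> \<bar>fcut_hi u a\<bar> \<le> B"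
proof -
  obtain B where B: "\<And>x. x \<in> {t. 0 < u t} \<Longrightarrow> \<bar>x\<bar> \<le> B"
    using u unfolding fuzzy_number_iff_superlevel bounded_iff by auto
  have "\<bar>fcut_lo u a\<bar> \<le> B \<and> \<bar>fcut_hi u a\<bar> \<le> B" if a: "a \<in> {0..1}" for a
  proof -
    let ?S = "level_set u a"
    have S: "-B \<le> x \<and> x \<le> B" if "x \<in> ?S" for x
      using B level_set_subset_support[of a u] a that by force
    obtain x where x: "x \<in> ?S"
      using level_set_nonempty[OF u] a by fastforce
    have "bdd_below ?S" "bdd_above ?S"
      using S by (meson bdd_belowI bdd_aboveI)+
    then have "-B \<le> Inf ?S \<and> Inf ?S \<le> x \<and> x \<le> Sup ?S \<and> Sup ?S \<le> B"
      using x S by (auto intro!: cInf_greatest cInf_lower cSup_least cSup_upper)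
    then show ?thesis
      using fcut_lo_eq_Inf_level_set[OF u] fcut_hi_eq_Sup_level_set[OF u] by auto
  qed
  then show thesis by (rule that)
qed

section \<open>The metric\<close>

definition fcut_dist :: "(real \<Rightarrow> real) \<Rightarrow> (real \<Rightarrow> real) \<Rightarrow> real \<Rightarrow> real" where
  "fcut_dist u v a = max \<bar>fcut_lo u a - fcut_lo v a\<bar> \<bar>fcut_hi u a - fcut_hi v a\<bar>"

lemma fdist_eq_SUP_fcut_dist: "fdist u v = (SUP a\<in>{0..1}. fcut_dist u v a)"
  by (simp add: fdist_def fcut_dist_def)

lemma bdd_above_fcut_dist:
  assumes "fuzzy_number u" "fuzzy_number v"
  shows "bdd_above (fcut_dist u v ` {0..1})"
proof -
  obtain B1 B2 where
    "\<And>a. a \<in> {0..1} \<Longrightarrow> \<bar>fcut_lo u a\<bar> \<le> B1 \<and> \<bar>fcut_hi u a\<bar> \<le> B1"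
    "\<And>a. a \<in> {0..1} \<Longrightarrow> \<bar>fcut_lo v a\<bar> \<le> B2 \<and> \<bar>fcut_hi v a\<bar> \<le> B2"
    using fcut_endpoints_bounded assms by metis
  then have "fcut_dist u v a \<le> B1 + B2" if "a \<in> {0..1}" for a
    using that unfolding fcut_dist_def by fastforce
  then show ?thesis
    by (intro bdd_aboveI2)
qed

lemma fcut_dist_le_fdist:
  "fuzzy_number u \<Longrightarrow> fuzzy_number v \<Longrightarrow> a \<in> {0..1} \<Longrightarrow> fcut_dist u v a \<le> fdist u v"
  unfolding fdist_eq_SUP_fcut_dist by (rule cSUP_upper) (auto simp: bdd_above_fcut_dist)

lemma fdist_leI: "(\<And>a. a \<in> {0..1} \<Longrightarrow> fcut_dist u v a \<le> M) \<Longrightarrow> fdist u v \<le> M"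
  unfolding fdist_eq_SUP_fcut_dist by (rule cSUP_least) auto

lemma fdist_nonneg: "fuzzy_number u \<Longrightarrow> fuzzy_number v \<Longrightarrow> 0 \<le> fdist u v"
  using fcut_dist_le_fdist[of u v 0] by (simp add: fcut_dist_def) linarith

lemma fdist_commute: "fdist u v = fdist v u"
  by (simp add: fdist_def abs_minus_commute)

lemma fdist_triangle:
  assumes "fuzzy_number u" "fuzzy_number v" "fuzzy_number w"
  shows "fdist u w \<le> fdist u v + fdist v w"
proof (rule fdist_leI)
  fix a :: real assume a: "a \<in> {0..1}"
  have "fcut_dist u w a \<le> fcut_dist u v a + fcut_dist v w a"
    unfolding fcut_dist_def by (simp add: max_def abs_triangle_ineq4) linarith?
  also have "\<dots> \<le> fdist u v + fdist v w"
    using fcut_dist_le_fdist assms a by (meson add_mono)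
  finally show "fcut_dist u w a \<le> fdist u v + fdist v w" .
qed

definition crisp :: "real \<Rightarrow> real \<Rightarrow> real" where
  "crisp r = (\<lambda>t. if t = r then 1 else 0)"

lemma fuzzy_number_crisp: "fuzzy_number (crisp r)"
proof -
  have "{t. a \<le> crisp r t} = (if a \<le> 0 then UNIV else if a \<le> 1 then {r} else {})" for a
    by (auto simp: crisp_def)
  moreover have "{t. 0 < crisp r t} = {r}"
    by (auto simp: crisp_def)
  ultimately show ?thesis
    unfolding fuzzy_number_iff_superlevel by (auto simp: crisp_def)
qed

lemma level_set_crisp: "a \<in> {0..1} \<Longrightarrow> level_set (crisp r) a = {r}"
  by (auto simp: level_set_def crisp_def)

lemma fdist_crisp: "fdist (crisp r) (crisp s) = \<bar>r - s\<bar>"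
proof -
  have "fcut_dist (crisp r) (crisp s) a = \<bar>r - s\<bar>" if "a \<in> {0..1}" for a
    using that fuzzy_number_crisp
    by (simp add: fcut_dist_def fcut_lo_eq_Inf_level_set fcut_hi_eq_Sup_level_set level_set_crisp)
  then have "fcut_dist (crisp r) (crisp s) ` {0..1} = {\<bar>r - s\<bar>}"
    by force
  then show ?thesis
    by (simp add: fdist_eq_SUP_fcut_dist)
qed

section \<open>Scalar multiplication and addition\<close>

lemma fscale_zero: "fscale 0 u = crisp 0"
  by (auto simp: fscale_def crisp_def)

lemma Collect_fscale:
  assumes "c \<noteq> 0"
  shows "{t. P (fscale c u t)} = (*) c ` {t. P (u t)}"
proof (intro set_eqI iffI)
  fix t assume "t \<in> {t. P (fscale c u t)}"
  then have "t / c \<in> {t. P (u t)}"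
    using assms by (simp add: fscale_def)
  moreover have "t = c * (t / c)"
    using assms by simp
  ultimately show "t \<in> (*) c ` {t. P (u t)}"
    by blast
next
  fix t assume "t \<in> (*) c ` {t. P (u t)}"
  then show "t \<in> {t. P (fscale c u t)}"
    using assms by (auto simp: fscale_def)
qed

lemma level_set_fscale: "c \<noteq> 0 \<Longrightarrow> level_set (fscale c u) a = (*) c ` level_set u a"
  by (simp add: level_set_def Collect_fscale)

lemma fuzzy_number_fscale:
  assumes u: "fuzzy_number u"
  shows "fuzzy_number (fscale c u)"
proof (cases "c = 0")
  case True
  then show ?thesis by (simp add: fscale_zero fuzzy_number_crisp)
next
  case False
  have scaleR: "(*\<^sub>R) c = (*) c"
    by (rule ext) simp
  obtain t where "u t = 1"
    using u by (auto simp: fuzzy_number_def)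
  then have "fscale c u (c * t) = 1"
    using False by (simp add: fscale_def)
  moreover have "0 \<le> fscale c u s" "fscale c u s \<le> 1" for s
    using u False by (simp_all add: fscale_def fuzzy_number_def)
  moreover have "closed ((*) c ` {t. a \<le> u t})" "convex ((*) c ` {t. a \<le> u t})" for a
    using u closed_scaling[of "{t. a \<le> u t}" c] convex_scaling[of "{t. a \<le> u t}" c]
    by (simp_all add: scaleR fuzzy_number_iff_superlevel)
  moreover have "bounded ((*) c ` {t. 0 < u t})"
    using bounded_scaling[OF bounded_support[OF u], of c] by (simp add: scaleR)
  ultimately show ?thesis
    by (intro fuzzy_numberI[of _ "c * t"]) (simp_all add: Collect_fscale[OF False])
qed

lemma
  assumes u: "fuzzy_number u" and a: "a \<in> {0..1}"
  shows fcut_lo_fscale: "fcut_lo (fscale c u) a = (if 0 \<le> c then c * fcut_lo u a else c * fcut_hi u a)"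
    and fcut_hi_fscale: "fcut_hi (fscale c u) a = (if 0 \<le> c then c * fcut_hi u a else c * fcut_lo u a)"
proof -
  have S: "level_set u a \<noteq> {}" "bounded (level_set u a)"
    using u a level_set_nonempty bounded_level_set by auto
  have "Inf (level_set (fscale c u) a) = (if 0 \<le> c then c * Inf (level_set u a) else c * Sup (level_set u a))
      \<and> Sup (level_set (fscale c u) a) = (if 0 \<le> c then c * Sup (level_set u a) else c * Inf (level_set u a))"
  proof (cases "c = 0")
    case True
    then show ?thesis
      using a by (simp add: fscale_zero level_set_crisp)
  next
    case False
    then show ?thesis
      using S by (simp add: level_set_fscale cInf_cSup_image_mult_nonneg cInf_cSup_image_mult_nonpos)
  qed
  then show "fcut_lo (fscale c u) a = (if 0 \<le> c then c * fcut_lo u a else c * fcut_hi u a)"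
    "fcut_hi (fscale c u) a = (if 0 \<le> c then c * fcut_hi u a else c * fcut_lo u a)"
    using u fuzzy_number_fscale[OF u, of c]
    by (simp_all add: fcut_lo_eq_Inf_level_set fcut_hi_eq_Sup_level_set)
qed

lemma fcut_dist_fscale:
  assumes "fuzzy_number u" "fuzzy_number v" "a \<in> {0..1}"
  shows "fcut_dist (fscale c u) (fscale c v) a = \<bar>c\<bar> * fcut_dist u v a"
  using assms
  by (simp add: fcut_dist_def fcut_lo_fscale fcut_hi_fscale abs_mult max_mult_distrib_left
      flip: right_diff_distrib) (simp add: max.commute)

lemma fdist_fscale_le:
  assumes "fuzzy_number u" "fuzzy_number v"
  shows "fdist (fscale c u) (fscale c v) \<le> \<bar>c\<bar> * fdist u v"
  using assms by (intro fdist_leI) (simp add: fcut_dist_fscale fcut_dist_le_fdist mult_left_mono)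

lemma bdd_above_fadd_range: "fuzzy_number u \<Longrightarrow> bdd_above (range (\<lambda>s. min (u s) (v (t - s))))"
  using fuzzy_number_range by (intro bdd_aboveI2[of _ _ 1]) (simp add: min_le_iff_disj)

lemma min_le_fadd: "fuzzy_number u \<Longrightarrow> min (u s) (v (t - s)) \<le> fadd u v t"
  unfolding fadd_def by (intro cSUP_upper bdd_above_fadd_range) auto

lemma less_fadd_iff: "fuzzy_number u \<Longrightarrow> b < fadd u v t \<longleftrightarrow> (\<exists>s. b < min (u s) (v (t - s)))"
  unfolding fadd_def by (simp add: less_cSUP_iff bdd_above_fadd_range)

lemma fadd_range:
  assumes "fuzzy_number u" "fuzzy_number v"
  shows "0 \<le> fadd u v t \<and> fadd u v t \<le> 1"
proof
  have "0 \<le> min (u 0) (v (t - 0))"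
    using fuzzy_number_range assms by simp
  then show "0 \<le> fadd u v t"
    using min_le_fadd[OF assms(1)] by (rule order_trans)
  show "fadd u v t \<le> 1"
    unfolding fadd_def
    by (rule cSUP_least) (use fuzzy_number_range[OF assms(1)] in \<open>auto simp: min_le_iff_disj\<close>)
qed

lemma compact_superlevel:
  assumes "fuzzy_number u" "0 < a"
  shows "compact {t. a \<le> u t}"
proof -
  have "bounded {t. a \<le> u t}"
    using assms(2) by (intro bounded_subset[OF bounded_support[OF assms(1)]]) auto
  then show ?thesis
    using assms(1) by (simp add: compact_eq_bounded_closed fuzzy_number_iff_superlevel)
qed

lemma attains_level_if_compact_superlevels:
  fixes g :: "'a::heine_borel \<Rightarrow> real"
  assumes compact: "\<And>b. 0 < b \<Longrightarrow> compact {s. b \<le> g s}" and bdd: "bdd_above (range g)"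
    and "0 < a" "a \<le> (SUP s. g s)"
  obtains s where "a \<le> g s"
proof -
  define b where "b n = a - a / real (n + 2)" for n
  have b: "0 < b n \<and> b n < a" for n
  proof -
    have "a / real (n + 2) < a / 1"
      using \<open>0 < a\<close> by (intro divide_strict_left_mono) auto
    then show ?thesis
      using \<open>0 < a\<close> by (simp add: b_def)
  qed
  have nonempty: "{s. b n \<le> g s} \<noteq> {}" for n
  proof -
    have "b n < (SUP s. g s)"
      using b[of n] assms(4) by linarith
    then obtain s where "b n < g s"
      using bdd less_cSUP_iff[of UNIV g] by auto
    then have "s \<in> {s. b n \<le> g s}"
      by simp
    then show ?thesis
      by blast
  qed
  have decreasing: "{s. b n \<le> g s} \<subseteq> {s. b m \<le> g s}" if "m \<le> n" for m n
  proof -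
    have "real (m + 2) \<le> real (n + 2)"
      using that by simp
    then have "b m \<le> b n"
      unfolding b_def using \<open>0 < a\<close> by (simp add: frac_le)
    then show ?thesis
      by auto
  qed
  have "(\<Inter>n. {s. b n \<le> g s}) \<noteq> {}"
    using compact b nonempty decreasing by (intro compact_nest) auto
  then obtain s where "b n \<le> g s" for n
    by blast
  moreover have "b \<longlonglongrightarrow> a"
    unfolding b_def using LIMSEQ_ignore_initial_segment[OF lim_const_over_n, of a 2]
    by (auto intro: tendsto_eq_intros)
  ultimately have "a \<le> g s"
    using LIMSEQ_le_const2[of b a "g s"] by auto
  then show thesis by (rule that)
qed

lemma fadd_attains:
  assumes u: "fuzzy_number u" and v: "fuzzy_number v" and "0 < a" "a \<le> fadd u v t"
  obtains s where "a \<le> u s" "a \<le> v (t - s)"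
proof (rule attains_level_if_compact_superlevels)
  show "compact {s. b \<le> min (u s) (v (t - s))}" if "0 < b" for b
  proof -
    have "{s. b \<le> min (u s) (v (t - s))} = {s. b \<le> u s} \<inter> (\<lambda>s. t - s) -` {y. b \<le> v y}"
      by auto
    moreover have "compact ({s. b \<le> u s} \<inter> (\<lambda>s. t - s) -` {y. b \<le> v y})"
      using that u v
      by (intro compact_Int_closed compact_superlevel continuous_closed_vimage continuous_intros)
         (simp_all add: fuzzy_number_iff_superlevel)
    ultimately show ?thesis
      by (simp only:)
  qed
  show "bdd_above (range (\<lambda>s. min (u s) (v (t - s))))"
    using u by (rule bdd_above_fadd_range)
  show "a \<le> (SUP s. min (u s) (v (t - s)))"
    using assms(4) by (simp add: fadd_def)
qed (use assms in auto)

lemma superlevel_fadd: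
  assumes u: "fuzzy_number u" and v: "fuzzy_number v"
  shows "{t. a \<le> fadd u v t} = {t. a \<le> u t} + {t. a \<le> v t}"
proof (cases "0 < a")
  case True
  show ?thesis
  proof (intro set_eqI iffI)
    fix t assume "t \<in> {t. a \<le> fadd u v t}"
    then obtain s where "a \<le> u s" "a \<le> v (t - s)"
      using fadd_attains[OF u v True] by auto
    then show "t \<in> {t. a \<le> u t} + {t. a \<le> v t}"
      using set_plus_intro[of s _ "t - s"] by auto
  next
    fix t assume "t \<in> {t. a \<le> u t} + {t. a \<le> v t}"
    then obtain x y where "a \<le> u x" "a \<le> v y" "t = x + y"
      by (auto elim: set_plus_elim)
    then show "t \<in> {t. a \<le> fadd u v t}"
      using min_le_fadd[OF u, of x v t] by simp
  qed
next
  case False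
  have univ: "{t. a \<le> w t} = UNIV" if "\<And>t. 0 \<le> w t" for w :: "real \<Rightarrow> real"
    using False that by (auto intro: order.trans[of a 0])
  have "x \<in> UNIV + UNIV" for x :: real
    using set_plus_intro[of x UNIV 0 UNIV] by simp
  then have "UNIV + UNIV = (UNIV :: real set)"
    by blast
  then show ?thesis
    using fadd_range[OF u v] fuzzy_number_range[OF u] fuzzy_number_range[OF v] by (simp add: univ)
qed

lemma support_fadd:
  assumes "fuzzy_number u"
  shows "{t. 0 < fadd u v t} = {t. 0 < u t} + {t. 0 < v t}"
proof (intro set_eqI iffI)
  fix t assume "t \<in> {t. 0 < fadd u v t}"
  then obtain s where "0 < u s" "0 < v (t - s)"
    using less_fadd_iff[OF assms] by auto
  then show "t \<in> {t. 0 < u t} + {t. 0 < v t}"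
    using set_plus_intro[of s _ "t - s"] by auto
next
  fix t assume "t \<in> {t. 0 < u t} + {t. 0 < v t}"
  then obtain x y where "0 < u x" "0 < v y" "t = x + y"
    by (auto elim: set_plus_elim)
  then show "t \<in> {t. 0 < fadd u v t}"
    using less_fadd_iff[OF assms, of 0 v t] by auto
qed

lemma fuzzy_number_fadd:
  assumes u: "fuzzy_number u" and v: "fuzzy_number v"
  shows "fuzzy_number (fadd u v)"
proof -
  obtain t0 t1 where "u t0 = 1" "v t1 = 1"
    using u v by (auto simp: fuzzy_number_def)
  then have "fadd u v (t0 + t1) = 1"
    using min_le_fadd[OF u, of t0 v "t0 + t1"] fadd_range[OF u v, of "t0 + t1"] by simp
  moreover have "closed {t. a \<le> fadd u v t}" for a
  proof (cases "0 < a")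
    case True
    then show ?thesis
      unfolding superlevel_fadd[OF u v] set_plus_image case_prod_unfold
      using u v by (intro compact_imp_closed compact_continuous_image compact_Times
          compact_superlevel continuous_intros) auto
  next
    case False
    then have "a \<le> fadd u v t" for t
      using fadd_range[OF u v, of t] by linarith
    then have "{t. a \<le> fadd u v t} = UNIV"
      by blast
    then show ?thesis by simp
  qed
  moreover have "convex {t. a \<le> fadd u v t}" for a
    using u v by (simp add: superlevel_fadd convex_set_plus fuzzy_number_iff_superlevel)
  moreover have "bounded {t. 0 < fadd u v t}"
    unfolding support_fadd[OF u] set_plus_image
    by (intro bounded_plus bounded_support u v)
  ultimately show ?thesis
    using fadd_range[OF u v] by (intro fuzzy_numberI[of _ "t0 + t1"]) simp_all
qed

lemma level_set_fadd:
  "fuzzy_number u \<Longrightarrow> fuzzy_number v \<Longrightarrow> level_set (fadd u v) a = level_set u a + level_set v a"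
  by (simp add: level_set_def support_fadd superlevel_fadd)

lemma
  assumes "fuzzy_number u" "fuzzy_number v" "a \<in> {0..1}"
  shows fcut_lo_fadd: "fcut_lo (fadd u v) a = fcut_lo u a + fcut_lo v a"
    and fcut_hi_fadd: "fcut_hi (fadd u v) a = fcut_hi u a + fcut_hi v a"
  using assms
  by (simp_all add: fcut_lo_eq_Inf_level_set fcut_hi_eq_Sup_level_set fuzzy_number_fadd
      level_set_fadd cInf_set_plus cSup_set_plus level_set_nonempty bounded_level_set
      bounded_imp_bdd_below bounded_imp_bdd_above)

lemma fdist_fadd_le:
  assumes "fuzzy_number u1" "fuzzy_number v1" "fuzzy_number u2" "fuzzy_number v2"
  shows "fdist (fadd u1 v1) (fadd u2 v2) \<le> fdist u1 u2 + fdist v1 v2"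
proof (rule fdist_leI)
  fix a :: real assume a: "a \<in> {0..1}"
  have "fcut_dist (fadd u1 v1) (fadd u2 v2) a \<le> fcut_dist u1 u2 a + fcut_dist v1 v2 a"
    using assms a unfolding fcut_dist_def
    by (simp add: fcut_lo_fadd fcut_hi_fadd max_def abs_triangle_ineq) linarith?
  also have "\<dots> \<le> fdist u1 u2 + fdist v1 v2"
    using assms a by (intro add_mono fcut_dist_le_fdist)
  finally show "fcut_dist (fadd u1 v1) (fadd u2 v2) a \<le> fdist u1 u2 + fdist v1 v2" .
qed

section \<open>The summability method\<close>

definition bg_mean ::
    "real \<Rightarrow> (nat \<Rightarrow> real) \<Rightarrow> (nat \<Rightarrow> real) \<Rightarrow> (nat \<Rightarrow> real) \<Rightarrow> (nat \<Rightarrow> real) \<Rightarrow> nat \<Rightarrow> real"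
  where
  "bg_mean \<theta> \<beta> \<gamma> t d n = 1 / Tbg \<beta> \<gamma> t n powr \<theta> * (\<Sum>k\<in>bg_idx \<beta> \<gamma> n. t k * d k)"

lemma N_lim_iff:
  "N_lim \<theta> a b \<beta> \<gamma> t fs f \<longleftrightarrow>
     (\<forall>k. fuzzy_fun a b (fs k)) \<and> fuzzy_fun a b f \<and>
     (\<forall>x\<in>{a..b}. bg_mean \<theta> \<beta> \<gamma> t (\<lambda>k. fdist (fs k x) (f x)) \<longlonglongrightarrow> 0)"
  unfolding N_lim_def bg_mean_def ..

lemma finite_bg_idx: "finite (bg_idx \<beta> \<gamma> n)"
proof (rule finite_subset)
  show "bg_idx \<beta> \<gamma> n \<subseteq> {..nat \<lceil>\<gamma> n\<rceil>}"
    by (auto simp: bg_idx_def le_nat_iff le_ceiling_iff)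
qed simp

lemma bg_mean_add: "bg_mean \<theta> \<beta> \<gamma> t (\<lambda>k. d k + e k) n = bg_mean \<theta> \<beta> \<gamma> t d n + bg_mean \<theta> \<beta> \<gamma> t e n"
  by (simp add: bg_mean_def distrib_left sum.distrib)

lemma bg_mean_cmult: "bg_mean \<theta> \<beta> \<gamma> t (\<lambda>k. c * d k) n = c * bg_mean \<theta> \<beta> \<gamma> t d n"
  by (simp add: bg_mean_def sum_distrib_left mult.left_commute)

lemma bg_mean_mono:
  assumes "\<forall>k\<ge>1. 0 \<le> t k" "\<And>k. 1 \<le> k \<Longrightarrow> d k \<le> e k"
  shows "bg_mean \<theta> \<beta> \<gamma> t d n \<le> bg_mean \<theta> \<beta> \<gamma> t e n"
  unfolding bg_mean_def using assms
  by (intro mult_left_mono sum_mono) (auto simp: bg_idx_def)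

lemma bg_mean_nonneg:
  assumes "\<forall>k\<ge>1. 0 \<le> t k" "\<And>k. 1 \<le> k \<Longrightarrow> 0 \<le> d k"
  shows "0 \<le> bg_mean \<theta> \<beta> \<gamma> t d n"
  using bg_mean_mono[of t "\<lambda>_. 0" d] assms by (simp add: bg_mean_def)

lemma N_lim_dominated:
  assumes t: "\<forall>k\<ge>1. 0 \<le> t k"
    and gs: "\<And>k. fuzzy_fun a b (gs k)" and g: "fuzzy_fun a b g"
    and le: "\<And>k x. x \<in> {a..b} \<Longrightarrow> fdist (gs k x) (g x) \<le> e k x"
    and lim: "\<And>x. x \<in> {a..b} \<Longrightarrow> bg_mean \<theta> \<beta> \<gamma> t (\<lambda>k. e k x) \<longlonglongrightarrow> 0"
  shows "N_lim \<theta> a b \<beta> \<gamma> t gs g"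
  unfolding N_lim_iff
proof (intro conjI allI ballI gs g)
  fix x assume x: "x \<in> {a..b}"
  have "fuzzy_number (gs k x)" "fuzzy_number (g x)" for k
    using gs g x by (auto simp: fuzzy_fun_def)
  then have "0 \<le> bg_mean \<theta> \<beta> \<gamma> t (\<lambda>k. fdist (gs k x) (g x)) n"
    "bg_mean \<theta> \<beta> \<gamma> t (\<lambda>k. fdist (gs k x) (g x)) n \<le> bg_mean \<theta> \<beta> \<gamma> t (\<lambda>k. e k x) n" for n
    using t le[OF x] by (auto intro!: bg_mean_nonneg bg_mean_mono fdist_nonneg)
  then show "bg_mean \<theta> \<beta> \<gamma> t (\<lambda>k. fdist (gs k x) (g x)) \<longlonglongrightarrow> 0"
    by (intro tendsto_sandwich[OF _ _ tendsto_const lim[OF x]]) auto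
qed

lemma N_lim_fadd:
  assumes t: "\<forall>k\<ge>1. 0 \<le> t k"
    and F: "N_lim \<theta> a b \<beta> \<gamma> t fs f" and G: "N_lim \<theta> a b \<beta> \<gamma> t gs g"
  shows "N_lim \<theta> a b \<beta> \<gamma> t (\<lambda>k x. fadd (fs k x) (gs k x)) (\<lambda>x. fadd (f x) (g x))"
proof (rule N_lim_dominated[OF t])
  show "fuzzy_fun a b (\<lambda>x. fadd (fs k x) (gs k x))" "fuzzy_fun a b (\<lambda>x. fadd (f x) (g x))" for k
    using F G by (auto simp: N_lim_iff fuzzy_fun_def fuzzy_number_fadd)
  show "fdist (fadd (fs k x) (gs k x)) (fadd (f x) (g x)) \<le> fdist (fs k x) (f x) + fdist (gs k x) (g x)"
    if "x \<in> {a..b}" for k x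
    using F G that by (intro fdist_fadd_le) (auto simp: N_lim_iff fuzzy_fun_def)
  show "bg_mean \<theta> \<beta> \<gamma> t (\<lambda>k. fdist (fs k x) (f x) + fdist (gs k x) (g x)) \<longlonglongrightarrow> 0"
    if "x \<in> {a..b}" for x
    using F G that unfolding bg_mean_add N_lim_iff by (intro tendsto_add_zero) auto
qed

lemma N_lim_fscale:
  assumes t: "\<forall>k\<ge>1. 0 \<le> t k" and F: "N_lim \<theta> a b \<beta> \<gamma> t fs f"
  shows "N_lim \<theta> a b \<beta> \<gamma> t (\<lambda>k x. fscale c (fs k x)) (\<lambda>x. fscale c (f x))"
proof (rule N_lim_dominated[OF t])
  show "fuzzy_fun a b (\<lambda>x. fscale c (fs k x))" "fuzzy_fun a b (\<lambda>x. fscale c (f x))" for k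
    using F by (auto simp: N_lim_iff fuzzy_fun_def fuzzy_number_fscale)
  show "fdist (fscale c (fs k x)) (fscale c (f x)) \<le> \<bar>c\<bar> * fdist (fs k x) (f x)"
    if "x \<in> {a..b}" for k x
    using F that by (intro fdist_fscale_le) (auto simp: N_lim_iff fuzzy_fun_def)
  show "bg_mean \<theta> \<beta> \<gamma> t (\<lambda>k. \<bar>c\<bar> * fdist (fs k x) (f x)) \<longlonglongrightarrow> 0"
    if "x \<in> {a..b}" for x
    using F that unfolding bg_mean_cmult N_lim_iff by (intro tendsto_mult_right_zero) auto
qed

lemma bg_mean_exponent_mono:
  assumes T: "filterlim (Tbg \<beta> \<gamma> t) at_top sequentially" and "\<theta> \<le> \<delta>"
    and lim: "bg_mean \<theta> \<beta> \<gamma> t d \<longlonglongrightarrow> 0"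
  shows "bg_mean \<delta> \<beta> \<gamma> t d \<longlonglongrightarrow> 0"
proof (rule Lim_null_comparison)
  show "\<forall>\<^sub>F n in sequentially. norm (bg_mean \<delta> \<beta> \<gamma> t d n) \<le> \<bar>bg_mean \<theta> \<beta> \<gamma> t d n\<bar>"
    using T unfolding filterlim_at_top
  proof (rule eventually_mono[OF spec[of _ 1]])
    fix n assume T1: "1 \<le> Tbg \<beta> \<gamma> t n"
    then have "1 / Tbg \<beta> \<gamma> t n powr \<delta> \<le> 1 / Tbg \<beta> \<gamma> t n powr \<theta>"
      using \<open>\<theta> \<le> \<delta>\<close> by (intro divide_left_mono powr_mono) auto
    then have "1 / Tbg \<beta> \<gamma> t n powr \<delta> * \<bar>\<Sum>k\<in>bg_idx \<beta> \<gamma> n. t k * d k\<bar>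
        \<le> 1 / Tbg \<beta> \<gamma> t n powr \<theta> * \<bar>\<Sum>k\<in>bg_idx \<beta> \<gamma> n. t k * d k\<bar>"
      by (rule mult_right_mono) simp
    then show "norm (bg_mean \<delta> \<beta> \<gamma> t d n) \<le> \<bar>bg_mean \<theta> \<beta> \<gamma> t d n\<bar>"
      by (simp add: bg_mean_def abs_mult)
  qed
  show "(\<lambda>n. \<bar>bg_mean \<theta> \<beta> \<gamma> t d n\<bar>) \<longlonglongrightarrow> 0"
    using tendsto_rabs_zero[OF lim] .
qed

lemma N_lim_exponent_mono:
  "filterlim (Tbg \<beta> \<gamma> t) at_top sequentially \<Longrightarrow> \<theta> \<le> \<delta> \<Longrightarrow>
    N_lim \<theta> a b \<beta> \<gamma> t fs f \<Longrightarrow> N_lim \<delta> a b \<beta> \<gamma> t fs f"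
  unfolding N_lim_iff using bg_mean_exponent_mono by blast

lemma N_set_exponent_mono:
  "filterlim (Tbg \<beta> \<gamma> t) at_top sequentially \<Longrightarrow> \<theta> \<le> \<delta> \<Longrightarrow>
    N_set \<theta> a b \<beta> \<gamma> t \<subseteq> N_set \<delta> a b \<beta> \<gamma> t"
  unfolding N_set_def using N_lim_exponent_mono by blast

lemma bg_mean_1_const:
  assumes "0 < Tbg \<beta> \<gamma> t n"
  shows "bg_mean 1 \<beta> \<gamma> t (\<lambda>k. c) n = c"
  using assms by (simp add: bg_mean_def Tbg_def flip: sum_distrib_right)

lemma N_lim_1_limits_fdist_eq_0:
  assumes t: "\<forall>k\<ge>1. 0 \<le> t k" and T: "filterlim (Tbg \<beta> \<gamma> t) at_top sequentially"
    and F: "N_lim 1 a b \<beta> \<gamma> t fs f" and G: "N_lim 1 a b \<beta> \<gamma> t fs g" and x: "x \<in> {a..b}"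
  shows "fdist (f x) (g x) = 0"
proof -
  let ?D = "fdist (f x) (g x)"
  let ?e = "\<lambda>k. fdist (fs k x) (f x) + fdist (fs k x) (g x)"
  have fuzzy: "fuzzy_number (fs k x)" "fuzzy_number (f x)" "fuzzy_number (g x)" for k
    using F G x by (auto simp: N_lim_iff fuzzy_fun_def)
  have "bg_mean 1 \<beta> \<gamma> t ?e \<longlonglongrightarrow> 0"
    using F G x unfolding bg_mean_add N_lim_iff by (intro tendsto_add_zero) auto
  moreover have "\<forall>\<^sub>F n in sequentially. ?D \<le> bg_mean 1 \<beta> \<gamma> t ?e n"
    using T unfolding filterlim_at_top
  proof (rule eventually_mono[OF spec[of _ 1]])
    fix n assume "1 \<le> Tbg \<beta> \<gamma> t n"
    then have "?D = bg_mean 1 \<beta> \<gamma> t (\<lambda>k. ?D) n"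
      by (simp add: bg_mean_1_const)
    also have "\<dots> \<le> bg_mean 1 \<beta> \<gamma> t ?e n"
      using t fdist_triangle[OF fuzzy(2,1,3)] by (intro bg_mean_mono) (simp_all add: fdist_commute)
    finally show "?D \<le> bg_mean 1 \<beta> \<gamma> t ?e n" .
  qed
  ultimately have "?D \<le> 0"
    by (rule tendsto_le[OF trivial_limit_sequentially _ tendsto_const])
  then show ?thesis
    using fdist_nonneg[OF fuzzy(2,3)] by simp
qed

lemma N_lim_replace_limit:
  assumes t: "\<forall>k\<ge>1. 0 \<le> t k" and T: "filterlim (Tbg \<beta> \<gamma> t) at_top sequentially"
    and "\<theta> \<le> 1" and G: "N_lim \<theta> a b \<beta> \<gamma> t fs g" and F: "N_lim 1 a b \<beta> \<gamma> t fs f"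
  shows "N_lim \<theta> a b \<beta> \<gamma> t fs f"
proof (rule N_lim_dominated[OF t])
  have G1: "N_lim 1 a b \<beta> \<gamma> t fs g"
    using N_lim_exponent_mono[OF T \<open>\<theta> \<le> 1\<close> G] .
  show "fuzzy_fun a b (fs k)" "fuzzy_fun a b f" for k
    using F by (simp_all add: N_lim_iff)
  show "fdist (fs k x) (f x) \<le> fdist (fs k x) (g x)" if x: "x \<in> {a..b}" for k x
  proof -
    have "fuzzy_number (fs k x)" "fuzzy_number (g x)" "fuzzy_number (f x)"
      using F G x by (auto simp: N_lim_iff fuzzy_fun_def)
    then have "fdist (fs k x) (f x) \<le> fdist (fs k x) (g x) + fdist (g x) (f x)"
      by (rule fdist_triangle)
    then show ?thesis
      using N_lim_1_limits_fdist_eq_0[OF t T F G1 x] by (simp add: fdist_commute)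
  qed
  show "bg_mean \<theta> \<beta> \<gamma> t (\<lambda>k. fdist (fs k x) (g x)) \<longlonglongrightarrow> 0" if "x \<in> {a..b}" for x
    using G that by (simp add: N_lim_iff)
qed

lemma bg_mean_1_null:
  assumes t: "\<forall>k\<ge>1. 0 \<le> t k" and T: "filterlim (Tbg \<beta> \<gamma> t) at_top sequentially"
    and d: "d \<longlonglongrightarrow> 0"
  shows "bg_mean 1 \<beta> \<gamma> t d \<longlonglongrightarrow> 0"
proof (rule tendstoI)
  fix e :: real assume e: "0 < e"
  obtain K where K: "\<And>k. K \<le> k \<Longrightarrow> \<bar>d k\<bar> < e / 2"
    using tendstoD[OF d, of "e / 2"] e by (auto simp: eventually_sequentially)
  define C where "C = (\<Sum>k<K. \<bar>t k * d k\<bar>)"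
  show "\<forall>\<^sub>F n in sequentially. dist (bg_mean 1 \<beta> \<gamma> t d n) 0 < e"
    using T unfolding filterlim_at_top
  proof (rule eventually_mono[OF spec[of _ "max 1 (2 * C / e + 1)"]])
    fix n
    let ?I = "bg_idx \<beta> \<gamma> n" and ?T = "Tbg \<beta> \<gamma> t n"
    assume "max 1 (2 * C / e + 1) \<le> ?T"
    then have T1: "1 \<le> ?T" and TC: "2 * C < e * ?T"
      using e by (auto simp: field_simps)
    have "\<bar>t k * d k\<bar> \<le> (if k < K then \<bar>t k * d k\<bar> else 0) + e / 2 * t k" if "k \<in> ?I" for k
    proof -
      have "0 \<le> t k"
        using t that by (simp add: bg_idx_def)
      moreover have "t k * \<bar>d k\<bar> \<le> t k * (e / 2)" if "K \<le> k"
        using K[OF that] \<open>0 \<le> t k\<close> by (intro mult_left_mono) auto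
      ultimately show ?thesis
        using e by (auto simp: abs_mult mult.commute)
    qed
    then have "\<bar>\<Sum>k\<in>?I. t k * d k\<bar> \<le> (\<Sum>k\<in>?I. (if k < K then \<bar>t k * d k\<bar> else 0) + e / 2 * t k)"
      by (intro order.trans[OF sum_abs sum_mono])
    also have "\<dots> = (\<Sum>k\<in>{k\<in>?I. k < K}. \<bar>t k * d k\<bar>) + e / 2 * ?T"
      by (simp add: sum.distrib sum.inter_filter finite_bg_idx sum_distrib_left Tbg_def)
    also have "(\<Sum>k\<in>{k\<in>?I. k < K}. \<bar>t k * d k\<bar>) \<le> C"
      unfolding C_def by (intro sum_mono2) auto
    finally have "\<bar>\<Sum>k\<in>?I. t k * d k\<bar> < e * ?T"
      using TC by simp
    then show "dist (bg_mean 1 \<beta> \<gamma> t d n) 0 < e"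
      using T1 by (simp add: bg_mean_def divide_less_eq)
  qed
qed

text \<open>
  This sequence tends to 0 because only late windows reach far out, yet on the \<open>n\<close>-th window
  it dominates \<open>T\<^sub>n\<^sup>-\<^sup>1\<^sup>/\<^sup>2\<close>.
\<close>
definition slow_null_seq :: "(nat \<Rightarrow> real) \<Rightarrow> (nat \<Rightarrow> real) \<Rightarrow> (nat \<Rightarrow> real) \<Rightarrow> nat \<Rightarrow> real" where
  "slow_null_seq \<beta> \<gamma> t k =
     Sup (insert 0 ((\<lambda>n. 1 / sqrt (max 1 (Tbg \<beta> \<gamma> t n))) ` {n. k \<in> bg_idx \<beta> \<gamma> n}))"

lemma bdd_above_slow_null_seq_set:
  "bdd_above (insert 0 ((\<lambda>n. 1 / sqrt (max 1 (Tbg \<beta> \<gamma> t n))) ` A))"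
  by (rule bdd_aboveI[of _ 1]) auto

lemma slow_null_seq_nonneg: "0 \<le> slow_null_seq \<beta> \<gamma> t k"
  unfolding slow_null_seq_def by (intro cSup_upper bdd_above_slow_null_seq_set) simp

lemma slow_null_seq_ge:
  "k \<in> bg_idx \<beta> \<gamma> n \<Longrightarrow> 1 / sqrt (max 1 (Tbg \<beta> \<gamma> t n)) \<le> slow_null_seq \<beta> \<gamma> t k"
  unfolding slow_null_seq_def by (intro cSup_upper bdd_above_slow_null_seq_set) auto

lemma slow_null_seq_le:
  assumes "0 \<le> \<eta>" "\<And>n. k \<in> bg_idx \<beta> \<gamma> n \<Longrightarrow> 1 / sqrt (max 1 (Tbg \<beta> \<gamma> t n)) \<le> \<eta>"
  shows "slow_null_seq \<beta> \<gamma> t k \<le> \<eta>"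
  unfolding slow_null_seq_def using assms by (intro cSup_least) auto

lemma slow_null_seq_tendsto_0:
  assumes T: "filterlim (Tbg \<beta> \<gamma> t) at_top sequentially"
  shows "slow_null_seq \<beta> \<gamma> t \<longlonglongrightarrow> 0"
proof (rule LIMSEQ_I)
  fix r :: real assume "0 < r"
  obtain N where N: "\<And>n. N \<le> n \<Longrightarrow> 1 / (r / 2)\<^sup>2 \<le> Tbg \<beta> \<gamma> t n"
    using T unfolding filterlim_at_top eventually_sequentially by blast
  have small: "1 / sqrt (max 1 (Tbg \<beta> \<gamma> t n)) \<le> r / 2" if "N \<le> n" for n
  proof -
    have "(1 / (r / 2))\<^sup>2 \<le> max 1 (Tbg \<beta> \<gamma> t n)"
      using N[OF that] by (simp add: power_divide)
    then have "1 / (r / 2) \<le> sqrt (max 1 (Tbg \<beta> \<gamma> t n))"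
      by (rule real_le_rsqrt)
    then show ?thesis
      using \<open>0 < r\<close> by (simp add: divide_le_eq mult.commute)
  qed
  obtain K where K: "(\<Union>n<N. bg_idx \<beta> \<gamma> n) \<subseteq> {..<K}"
    using finite_nat_bounded[of "\<Union>n<N. bg_idx \<beta> \<gamma> n"] by (auto simp: finite_bg_idx)
  have le: "slow_null_seq \<beta> \<gamma> t k \<le> r / 2" if "K \<le> k" for k
  proof (rule slow_null_seq_le)
    fix n assume "k \<in> bg_idx \<beta> \<gamma> n"
    then have "\<not> n < N"
      using K \<open>K \<le> k\<close> by (auto simp: subset_iff)
    then show "1 / sqrt (max 1 (Tbg \<beta> \<gamma> t n)) \<le> r / 2"
      using small not_less by blast
  qed (use \<open>0 < r\<close> in simp)
  show "\<exists>K. \<forall>k\<ge>K. norm (slow_null_seq \<beta> \<gamma> t k - 0) < r"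
  proof (intro exI allI impI)
    fix k assume "K \<le> k"
    then show "norm (slow_null_seq \<beta> \<gamma> t k - 0) < r"
      using le[of k] slow_null_seq_nonneg[of \<beta> \<gamma> t k] \<open>0 < r\<close> by simp
  qed
qed

lemma bg_mean_half_slow_null_seq_ge_1:
  assumes t: "\<forall>k\<ge>1. 0 \<le> t k" and T1: "1 \<le> Tbg \<beta> \<gamma> t n"
  shows "1 \<le> bg_mean (1/2) \<beta> \<gamma> t (slow_null_seq \<beta> \<gamma> t) n"
proof -
  let ?I = "bg_idx \<beta> \<gamma> n" and ?T = "Tbg \<beta> \<gamma> t n"
  have "sqrt ?T = ?T / sqrt ?T"
    using T1 by (simp add: real_div_sqrt)
  also have "\<dots> = (\<Sum>k\<in>?I. t k * (1 / sqrt (max 1 ?T)))"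
    using T1 by (simp add: Tbg_def sum_divide_distrib)
  also have "\<dots> \<le> (\<Sum>k\<in>?I. t k * slow_null_seq \<beta> \<gamma> t k)"
    using t slow_null_seq_ge by (intro sum_mono mult_left_mono) (auto simp: bg_idx_def)
  finally show ?thesis
    using T1 by (simp add: bg_mean_def powr_half_sqrt le_divide_eq)
qed

lemma N_set_half_psubset_N_set_1:
  assumes "a \<le> b" and t: "\<forall>k\<ge>1. 0 \<le> t k" and T: "filterlim (Tbg \<beta> \<gamma> t) at_top sequentially"
  shows "N_set (1/2) a b \<beta> \<gamma> t \<subset> N_set 1 a b \<beta> \<gamma> t"
proof -
  define R where "R = slow_null_seq \<beta> \<gamma> t"
  define fs where "fs k x = crisp (R k)" for k and x :: real
  define f where "f x = crisp 0" for x :: real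
  have dist: "(\<lambda>k. fdist (fs k x) (f x)) = R" for x
    using slow_null_seq_nonneg by (simp add: fs_def f_def R_def fdist_crisp)
  have fuzzy: "fuzzy_fun a b (fs k)" "fuzzy_fun a b f" for k
    by (simp_all add: fs_def f_def fuzzy_fun_def fuzzy_number_crisp)
  have lim1: "N_lim 1 a b \<beta> \<gamma> t fs f"
    unfolding N_lim_iff dist R_def using fuzzy bg_mean_1_null[OF t T slow_null_seq_tendsto_0[OF T]]
    by blast
  have "\<not> N_lim (1/2) a b \<beta> \<gamma> t fs g" for g
  proof
    assume "N_lim (1/2) a b \<beta> \<gamma> t fs g"
    from N_lim_replace_limit[OF t T _ this lim1] have "N_lim (1/2) a b \<beta> \<gamma> t fs f"
      by simp
    then have "bg_mean (1/2) \<beta> \<gamma> t R \<longlonglongrightarrow> 0"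
      using \<open>a \<le> b\<close> unfolding N_lim_iff dist by (meson atLeastAtMost_iff order_refl)
    then have "\<forall>\<^sub>F n in sequentially. bg_mean (1/2) \<beta> \<gamma> t R n < 1"
      by (rule order_tendstoD) simp
    moreover have "\<forall>\<^sub>F n in sequentially. 1 \<le> bg_mean (1/2) \<beta> \<gamma> t R n"
      using T unfolding filterlim_at_top R_def
      by (rule eventually_mono[OF spec[of _ 1]]) (rule bg_mean_half_slow_null_seq_ge_1[OF t])
    ultimately have "\<forall>\<^sub>F n in sequentially. False"
      by eventually_elim simp
    then show False by simp
  qed
  with lim1 have "fs \<in> N_set 1 a b \<beta> \<gamma> t - N_set (1/2) a b \<beta> \<gamma> t"
    unfolding N_set_def by blast
  moreover have "N_set (1/2) a b \<beta> \<gamma> t \<subseteq> N_set 1 a b \<beta> \<gamma> t"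
    by (rule N_set_exponent_mono[OF T]) simp
  ultimately show ?thesis by blast
qed

theorem theorem3p1:
  fixes \<beta> \<gamma> t :: "nat \<Rightarrow> real" and a b :: real
  assumes ab: "a \<le> b"
    and \<beta>_pos: "\<forall>n\<ge>1. \<beta> n > 0" and \<gamma>_pos: "\<forall>n\<ge>1. \<gamma> n > 0"
    and \<beta>_mono: "\<forall>m n. 1 \<le> m \<and> m \<le> n \<longrightarrow> \<beta> m \<le> \<beta> n"
    and \<gamma>_mono: "\<forall>m n. 1 \<le> m \<and> m \<le> n \<longrightarrow> \<gamma> m \<le> \<gamma> n"
    and \<gamma>\<beta>: "\<forall>n\<ge>1. \<beta> n \<le> \<gamma> n"
    and diff_inf: "filterlim (\<lambda>n. \<gamma> n - \<beta> n) at_top sequentially"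
    and t_pos: "\<forall>k\<ge>1. t k > 0"
    and T_inf: "filterlim (Tbg \<beta> \<gamma> t) at_top sequentially"
  shows
    "(\<forall>\<theta> fs f gs g. 0 < \<theta> \<and> \<theta> \<le> 1 \<and>
        N_lim \<theta> a b \<beta> \<gamma> t fs f \<and> N_lim \<theta> a b \<beta> \<gamma> t gs g \<longrightarrow>
        N_lim \<theta> a b \<beta> \<gamma> t (\<lambda>k x. fadd (fs k x) (gs k x)) (\<lambda>x. fadd (f x) (g x)) \<and>
        (\<forall>c::real. N_lim \<theta> a b \<beta> \<gamma> t (\<lambda>k x. fscale c (fs k x)) (\<lambda>x. fscale c (f x))))
     \<and> (\<forall>\<theta> \<delta>. 0 < \<theta> \<and> \<theta> \<le> \<delta> \<and> \<delta> \<le> 1 \<longrightarrow>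
          N_set \<theta> a b \<beta> \<gamma> t \<subseteq> N_set \<delta> a b \<beta> \<gamma> t)
     \<and> (\<exists>\<theta> \<delta>. 0 < \<theta> \<and> \<theta> < \<delta> \<and> \<delta> \<le> 1 \<and>
          N_set \<theta> a b \<beta> \<gamma> t \<subset> N_set \<delta> a b \<beta> \<gamma> t)"
proof -
  have t: "\<forall>k\<ge>1. 0 \<le> t k"
    using t_pos by (simp add: less_imp_le)
  show ?thesis
  proof (intro conjI allI impI)
    fix \<theta> fs f gs g c
    assume "0 < \<theta> \<and> \<theta> \<le> 1 \<and> N_lim \<theta> a b \<beta> \<gamma> t fs f \<and> N_lim \<theta> a b \<beta> \<gamma> t gs g"
    then show "N_lim \<theta> a b \<beta> \<gamma> t (\<lambda>k x. fadd (fs k x) (gs k x)) (\<lambda>x. fadd (f x) (g x))"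
      "N_lim \<theta> a b \<beta> \<gamma> t (\<lambda>k x. fscale c (fs k x)) (\<lambda>x. fscale c (f x))"
      using N_lim_fadd[OF t] N_lim_fscale[OF t] by blast+
  next
    fix \<theta> \<delta> :: real
    assume "0 < \<theta> \<and> \<theta> \<le> \<delta> \<and> \<delta> \<le> 1"
    then show "N_set \<theta> a b \<beta> \<gamma> t \<subseteq> N_set \<delta> a b \<beta> \<gamma> t"
      using N_set_exponent_mono[OF T_inf] by blast
  next
    show "\<exists>\<theta> \<delta>. 0 < \<theta> \<and> \<theta> < \<delta> \<and> \<delta> \<le> 1 \<and> N_set \<theta> a b \<beta> \<gamma> t \<subset> N_set \<delta> a b \<beta> \<gamma> t"
      using N_set_half_psubset_N_set_1[OF ab t T_inf] by (intro exI[of _ "1/2"] exI[of _ 1]) simp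
  qed
qed

end
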